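(* Let $\mathbb{A}\colon\mathbb{R}^d\to\mathbb{R}^d$ be Lipschitz continuous and let $T>0$, $X_0\in\mathbb{R}^d$. Then there is a unique $(X,Z)\in\mathcal{C}^1([0,T),\mathbb{R}^{2d})$ with $X(0)=X_0$, $Z(0)=0$ satisfying, for all $t\in(0,T)$, \[ \dot X(t)=-Z(t)-\mathbb{A}(X(t)),\qquad \dot Z(t)=-\frac{1}{T-t}Z(t)-\frac{1}{T-t}\mathbb{A}(X(t)). \] *)

theory Defs
  imports "HOL-Analysis.Analysis"
begin

definition C1_on :: "real set \<Rightarrow> (real \<Rightarrow> 'a::real_normed_vector) \<Rightarrow> bool" where
  "C1_on S f \<longleftrightarrow> (\<exists>f'. (\<forall>t\<in>S. (f has_vector_derivative f' t) (at t within S))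
                        \<and> continuous_on S f')"

end

theory Submission
  imports Defs
begin

(* For Y = (X, Z) the system reads Y' = F t Y, where F t is Lipschitz with constant
   (1 + 1/(T - S)) (1 + L) uniformly for t in [0, S], for every S < T: the singularity at
   t = T is never reached.  On each [0, S] the Picard-Lindelof theorem, proved with Banach's
   fixed point theorem for the Bielecki norm, gives a unique solution of the integral
   equation Y t = Y 0 + integral_0^t F s (Y s).  By uniqueness these solutions
   agree on overlaps, so they glue to a solution on [0, T), and any C^1 solution on [0, T)
   solves every integral equation and hence coincides with it. *)

definition picard_operator ::
    "(real \<Rightarrow> 'b::banach \<Rightarrow> 'b) \<Rightarrow> 'b \<Rightarrow> (real \<Rightarrow> 'b) \<Rightarrow> real \<Rightarrow> 'b" where
  "picard_operator F y0 Y t = y0 + integral {0..t} (\<lambda>s. F s (Y s))"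

definition integral_solution ::
    "real \<Rightarrow> (real \<Rightarrow> 'b::banach \<Rightarrow> 'b) \<Rightarrow> 'b \<Rightarrow> (real \<Rightarrow> 'b) \<Rightarrow> bool" where
  "integral_solution S F y0 Y \<longleftrightarrow>
     continuous_on {0..S} Y \<and> (\<forall>t\<in>{0..S}. Y t = picard_operator F y0 Y t)"

lemma picard_operator_cong:
  "(\<And>s. s \<in> {0..t} \<Longrightarrow> Y s = Y' s) \<Longrightarrow> picard_operator F y0 Y t = picard_operator F y0 Y' t"
  unfolding picard_operator_def by (metis (no_types, lifting) integral_cong)

lemma continuous_on_compose_Pair:
  assumes "continuous_on (U \<times> UNIV) (\<lambda>(t, y). F t y)" "S \<subseteq> U" "continuous_on S Y"
  shows "continuous_on S (\<lambda>t. F t (Y t))"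
proof -
  have "continuous_on S (\<lambda>t. (t, Y t))"
    by (intro continuous_intros assms(3))
  then show ?thesis
    using continuous_on_compose2[OF assms(1)] assms(2) by fastforce
qed

lemma continuous_on_picard_operator:
  assumes "continuous_on ({0..S} \<times> UNIV) (\<lambda>(t, y). F t y)" "continuous_on {0..S} Y"
  shows "continuous_on {0..S} (picard_operator F y0 Y)"
proof -
  have "continuous_on {0..S} (\<lambda>t. integral {0..t} (\<lambda>s. F s (Y s)))"
    using continuous_on_compose_Pair[OF assms(1) order_refl assms(2)]
    by (intro indefinite_integral_continuous_1 integrable_continuous_real)
  then show ?thesis
    unfolding picard_operator_def by (intro continuous_intros)
qed

lemma integral_solution_mono:
  "integral_solution S' F y0 Y \<Longrightarrow> S \<le> S' \<Longrightarrow> integral_solution S F y0 Y"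
  unfolding integral_solution_def by (auto intro: continuous_on_subset)

text \<open>A continuous function on \<open>{0..S}\<close> is encoded as the bounded continuous function
  \<open>t \<mapsto> exp (-2Kt) Y t\<close>, extended constantly outside \<open>{0..S}\<close>. The supremum distance of
  these encodings is the Bielecki distance, for which the Picard operator of a
  \<open>K\<close>-Lipschitz field is a contraction with factor \<open>1/2\<close>.\<close>

definition weighted_bcontfun :: "real \<Rightarrow> real \<Rightarrow> (real \<Rightarrow> 'b::real_normed_vector) \<Rightarrow> real \<Rightarrow>\<^sub>C 'b" where
  "weighted_bcontfun K S Y = Bcontfun (\<lambda>t. exp (- (2 * K) * clamp 0 S t) *\<^sub>R Y (clamp 0 S t))"

definition unweighted :: "real \<Rightarrow> (real \<Rightarrow>\<^sub>C 'b::real_normed_vector) \<Rightarrow> real \<Rightarrow> 'b" where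
  "unweighted K g s = exp (2 * K * s) *\<^sub>R apply_bcontfun g s"

lemma clamp_in_Icc: "0 \<le> S \<Longrightarrow> clamp 0 S t \<in> {0..S::real}"
  using clamp_in_interval[of 0 S t] by simp

lemma clamp_in_bcontfun:
  fixes f :: "real \<Rightarrow> 'b::metric_space"
  assumes "continuous_on {a..b} f"
  shows "(\<lambda>t. f (clamp a b t)) \<in> bcontfun"
proof -
  obtain g :: "real \<Rightarrow>\<^sub>C 'b" where "\<And>t. g t = f (clamp a b t)"
    using continuous_on_cbox_bcontfunE[of a b f] assms by auto
  then have "(\<lambda>t. f (clamp a b t)) = apply_bcontfun g" by auto
  then show ?thesis by (simp add: apply_bcontfun)
qed

lemma apply_weighted_bcontfun:
  assumes "continuous_on {0..S} Y"
  shows "apply_bcontfun (weighted_bcontfun K S Y) t = exp (- (2 * K) * clamp 0 S t) *\<^sub>R Y (clamp 0 S t)"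
proof -
  have "continuous_on {0..S} (\<lambda>t. exp (- (2 * K) * t) *\<^sub>R Y t)"
    by (intro continuous_intros assms)
  from Bcontfun_inverse[OF clamp_in_bcontfun[OF this]] show ?thesis
    unfolding weighted_bcontfun_def by simp
qed

lemma unweighted_weighted_bcontfun:
  "continuous_on {0..S} Y \<Longrightarrow> t \<in> {0..S} \<Longrightarrow> unweighted K (weighted_bcontfun K S Y) t = Y t"
  by (simp add: unweighted_def apply_weighted_bcontfun flip: exp_add)

lemma continuous_on_unweighted: "continuous_on U (unweighted K g)"
  unfolding unweighted_def
  by (intro continuous_intros continuous_on_subset[OF continuous_on_apply_bcontfun]) auto

lemma norm_integral_diff_exp_weighted_le:
  fixes F :: "real \<Rightarrow> 'b::banach \<Rightarrow> 'b"
  assumes "0 \<le> t"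
    and lip: "\<And>s. s \<in> {0..t} \<Longrightarrow> K-lipschitz_on UNIV (F s)"
    and int: "(\<lambda>s. F s (Y s)) integrable_on {0..t}" "(\<lambda>s. F s (Y' s)) integrable_on {0..t}"
    and close: "\<And>s. s \<in> {0..t} \<Longrightarrow> norm (Y s - Y' s) \<le> d * exp (2 * K * s)"
  shows "norm (integral {0..t} (\<lambda>s. F s (Y s)) - integral {0..t} (\<lambda>s. F s (Y' s)))
           \<le> d / 2 * exp (2 * K * t)"
proof -
  have d: "0 \<le> d"
    using close[of 0] \<open>0 \<le> t\<close> by (simp add: order_trans[OF norm_ge_zero])
  have pointwise: "norm (F s (Y s) - F s (Y' s)) \<le> K * d * exp (2 * K * s)" if "s \<in> {0..t}" for s
  proof -
    have "norm (F s (Y s) - F s (Y' s)) \<le> K * norm (Y s - Y' s)"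
      using lip[OF that] by (rule lipschitz_on_normD) auto
    also have "\<dots> \<le> K * (d * exp (2 * K * s))"
      using close[OF that] lipschitz_on_nonneg[OF lip[OF that]] by (rule mult_left_mono)
    finally show ?thesis by simp
  qed
  have "((\<lambda>s. K * d * exp (2 * K * s)) has_integral
          d / 2 * exp (2 * K * t) - d / 2 * exp (2 * K * 0)) {0..t}"
  proof (rule fundamental_theorem_of_calculus[OF \<open>0 \<le> t\<close>])
    fix s
    show "((\<lambda>s. d / 2 * exp (2 * K * s)) has_vector_derivative K * d * exp (2 * K * s))
            (at s within {0..t})"
      by (auto intro!: derivative_eq_intros simp flip: has_real_derivative_iff_has_vector_derivative)
  qed
  then have primitive: "((\<lambda>s. K * d * exp (2 * K * s)) has_integral d / 2 * exp (2 * K * t) - d / 2) {0..t}"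
    by simp
  have "norm (integral {0..t} (\<lambda>s. F s (Y s)) - integral {0..t} (\<lambda>s. F s (Y' s)))
        = norm (integral {0..t} (\<lambda>s. F s (Y s) - F s (Y' s)))"
    using int by (simp add: integral_diff)
  also have "\<dots> \<le> integral {0..t} (\<lambda>s. K * d * exp (2 * K * s))"
    using integrable_diff[OF int] has_integral_integrable[OF primitive] pointwise
    by (rule integral_norm_bound_integral)
  also have "\<dots> = d / 2 * exp (2 * K * t) - d / 2"
    using primitive by (rule integral_unique)
  finally show ?thesis using d by simp
qed

lemma picard_operator_weighted_contraction:
  fixes F :: "real \<Rightarrow> 'b::banach \<Rightarrow> 'b"
  assumes "0 \<le> S"
    and lip: "\<And>t. t \<in> {0..S} \<Longrightarrow> K-lipschitz_on UNIV (F t)"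
    and cont: "continuous_on ({0..S} \<times> UNIV) (\<lambda>(t, y). F t y)"
  shows "dist (weighted_bcontfun K S (picard_operator F y0 (unweighted K g)))
               (weighted_bcontfun K S (picard_operator F y0 (unweighted K g')))
         \<le> 1/2 * dist g g'"
proof (rule dist_bound)
  fix t
  define c where "c = clamp 0 S t"
  have c: "0 \<le> c" "c \<le> S"
    using clamp_in_Icc[OF \<open>0 \<le> S\<close>] by (auto simp: c_def)
  have close: "norm (unweighted K g s - unweighted K g' s) \<le> dist g g' * exp (2 * K * s)" for s
    using dist_bounded[of g s g']
    by (simp add: unweighted_def dist_norm mult.commute flip: scaleR_diff_right)
  have integrable: "(\<lambda>s. F s (unweighted K h s)) integrable_on {0..c}" for h
    using c continuous_on_compose_Pair[OF cont _ continuous_on_unweighted, of "{0..c}"]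
    by (intro integrable_continuous_real) auto
  have "norm (integral {0..c} (\<lambda>s. F s (unweighted K g s)) - integral {0..c} (\<lambda>s. F s (unweighted K g' s)))
        \<le> dist g g' / 2 * exp (2 * K * c)"
    using c lip integrable close by (intro norm_integral_diff_exp_weighted_le) auto
  then have "dist (weighted_bcontfun K S (picard_operator F y0 (unweighted K g)) t)
                  (weighted_bcontfun K S (picard_operator F y0 (unweighted K g')) t)
             \<le> exp (- (2 * K) * c) * (dist g g' / 2 * exp (2 * K * c))"
    by (simp add: apply_weighted_bcontfun[OF continuous_on_picard_operator[OF cont continuous_on_unweighted]]
        picard_operator_def c_def dist_norm flip: scaleR_diff_right)
  also have "\<dots> = dist g g' / 2"
    by (simp add: mult.left_commute flip: exp_add)
  finally show "dist (weighted_bcontfun K S (picard_operator F y0 (unweighted K g)) t)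
                     (weighted_bcontfun K S (picard_operator F y0 (unweighted K g')) t) \<le> 1/2 * dist g g'"
    by simp
qed

lemma weighted_bcontfun_fixed_point:
  assumes "0 \<le> S" and cont: "continuous_on ({0..S} \<times> UNIV) (\<lambda>(t, y). F t y)"
    and Y: "integral_solution S F y0 Y"
  shows "weighted_bcontfun K S (picard_operator F y0 (unweighted K (weighted_bcontfun K S Y)))
           = weighted_bcontfun K S Y"
proof (rule bcontfun_eqI)
  fix s
  have Y_cont: "continuous_on {0..S} Y"
    and Y_eq: "\<And>t. t \<in> {0..S} \<Longrightarrow> picard_operator F y0 Y t = Y t"
    using Y by (auto simp: integral_solution_def)
  have "picard_operator F y0 (unweighted K (weighted_bcontfun K S Y)) r = Y r" if "r \<in> {0..S}" for r
  proof -
    have "picard_operator F y0 (unweighted K (weighted_bcontfun K S Y)) r = picard_operator F y0 Y r"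
      using that by (intro picard_operator_cong) (simp add: unweighted_weighted_bcontfun[OF Y_cont])
    with Y_eq[OF that] show ?thesis
      by simp
  qed
  moreover have "clamp 0 S s \<in> {0..S}"
    using \<open>0 \<le> S\<close> by (rule clamp_in_Icc)
  ultimately show "weighted_bcontfun K S (picard_operator F y0 (unweighted K (weighted_bcontfun K S Y))) s
                   = weighted_bcontfun K S Y s"
    by (simp add: apply_weighted_bcontfun Y_cont continuous_on_picard_operator[OF cont continuous_on_unweighted])
qed

lemma integral_solution_exists_unique:
  fixes F :: "real \<Rightarrow> 'b::banach \<Rightarrow> 'b"
  assumes "0 \<le> S"
    and lip: "\<And>t. t \<in> {0..S} \<Longrightarrow> K-lipschitz_on UNIV (F t)"
    and cont: "continuous_on ({0..S} \<times> UNIV) (\<lambda>(t, y). F t y)"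
  shows "\<exists>Y. integral_solution S F y0 Y \<and>
           (\<forall>Y'. integral_solution S F y0 Y' \<longrightarrow> (\<forall>t\<in>{0..S}. Y' t = Y t))"
proof -
  define \<Phi> where "\<Phi> g = weighted_bcontfun K S (picard_operator F y0 (unweighted K g))" for g
  have "\<exists>!g. \<Phi> g = g"
    unfolding \<Phi>_def using picard_operator_weighted_contraction[OF assms]
    by (intro banach_fix_type[of "1/2"]) auto
  then obtain g where fixed: "\<Phi> g = g" and unique: "\<And>g'. \<Phi> g' = g' \<Longrightarrow> g' = g"
    by blast
  have "unweighted K g t = picard_operator F y0 (unweighted K g) t" if "t \<in> {0..S}" for t
    using arg_cong[OF fixed, of "\<lambda>g. unweighted K g t"] that
    by (simp add: \<Phi>_def unweighted_weighted_bcontfun continuous_on_picard_operator[OF cont continuous_on_unweighted])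
  then have solution: "integral_solution S F y0 (unweighted K g)"
    by (simp add: integral_solution_def continuous_on_unweighted)
  have "Y t = unweighted K g t" if Y: "integral_solution S F y0 Y" and t: "t \<in> {0..S}" for Y t
  proof -
    have "continuous_on {0..S} Y"
      using Y by (simp add: integral_solution_def)
    moreover have "weighted_bcontfun K S Y = g"
      using weighted_bcontfun_fixed_point[OF \<open>0 \<le> S\<close> cont Y] by (intro unique) (simp add: \<Phi>_def)
    ultimately show ?thesis
      using unweighted_weighted_bcontfun t by metis
  qed
  with solution show ?thesis
    by blast
qed

lemma integral_solution_initial: "integral_solution S F y0 Y \<Longrightarrow> 0 \<le> S \<Longrightarrow> Y 0 = y0"
  by (simp add: integral_solution_def picard_operator_def)

lemma integral_solution_has_vector_derivative:
  assumes Y: "integral_solution S F y0 Y"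
    and cont: "continuous_on ({0..S} \<times> UNIV) (\<lambda>(t, y). F t y)"
    and t: "t \<in> {0..S}"
  shows "(Y has_vector_derivative F t (Y t)) (at t within {0..S})"
proof -
  have Y_cont: "continuous_on {0..S} Y"
    and Y_eq: "\<And>t. t \<in> {0..S} \<Longrightarrow> Y t = picard_operator F y0 Y t"
    using Y by (auto simp: integral_solution_def)
  have "(picard_operator F y0 Y has_vector_derivative F t (Y t)) (at t within {0..S})"
    unfolding picard_operator_def
    using integral_has_vector_derivative[OF continuous_on_compose_Pair[OF cont order_refl Y_cont] t]
    by (auto intro!: derivative_eq_intros)
  then show ?thesis
    by (rule has_vector_derivative_transform_within[where d = 1]) (use t Y_eq in auto)
qed

lemma ode_solution_imp_integral_solution:
  fixes F :: "real \<Rightarrow> 'b::banach \<Rightarrow> 'b"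
  assumes "0 \<le> S" and Y_cont: "continuous_on {0..S} Y"
    and Y': "\<And>t. t \<in> {0<..<S} \<Longrightarrow> (Y has_vector_derivative F t (Y t)) (at t)"
  shows "integral_solution S F (Y 0) Y"
  unfolding integral_solution_def picard_operator_def
proof (intro conjI ballI Y_cont)
  fix t
  assume t: "t \<in> {0..S}"
  then have "((\<lambda>s. F s (Y s)) has_integral Y t - Y 0) {0..t}"
    by (intro fundamental_theorem_of_calculus_interior continuous_on_subset[OF Y_cont] Y') auto
  then show "Y t = Y 0 + integral {0..t} (\<lambda>s. F s (Y s))"
    by (simp add: integral_unique)
qed

lemma integral_solution_exists_unique_below:
  fixes F :: "real \<Rightarrow> 'b::banach \<Rightarrow> 'b"
  assumes lip: "\<And>S. S < T \<Longrightarrow> \<exists>K. \<forall>t\<in>{0..S}. K-lipschitz_on UNIV (F t)"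
    and cont: "continuous_on ({0..<T} \<times> UNIV) (\<lambda>(t, y). F t y)"
    and "0 \<le> S" "S < T"
  shows "\<exists>Y. integral_solution S F y0 Y \<and>
           (\<forall>Y'. integral_solution S F y0 Y' \<longrightarrow> (\<forall>t\<in>{0..S}. Y' t = Y t))"
proof -
  obtain K where "\<And>t. t \<in> {0..S} \<Longrightarrow> K-lipschitz_on UNIV (F t)"
    using lip \<open>S < T\<close> by blast
  moreover have "continuous_on ({0..S} \<times> UNIV) (\<lambda>(t, y). F t y)"
    using cont by (rule continuous_on_subset) (use \<open>S < T\<close> in auto)
  ultimately show ?thesis
    using integral_solution_exists_unique[OF \<open>0 \<le> S\<close>] by blast
qed

lemma integral_solution_unique_below:
  fixes F :: "real \<Rightarrow> 'b::banach \<Rightarrow> 'b"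
  assumes lip: "\<And>S. S < T \<Longrightarrow> \<exists>K. \<forall>t\<in>{0..S}. K-lipschitz_on UNIV (F t)"
    and cont: "continuous_on ({0..<T} \<times> UNIV) (\<lambda>(t, y). F t y)"
    and "S < T" "integral_solution S F y0 Y" "integral_solution S F y0 Y'" "t \<in> {0..S}"
  shows "Y t = Y' t"
proof -
  have "0 \<le> S"
    using \<open>t \<in> {0..S}\<close> by simp
  then obtain Z where "\<And>Y. integral_solution S F y0 Y \<Longrightarrow> \<forall>t\<in>{0..S}. Y t = Z t"
    using integral_solution_exists_unique_below[OF lip cont _ \<open>S < T\<close>] by blast
  then show ?thesis
    using assms(4-6) by metis
qed

lemma ode_solution_unique_Ico:
  fixes F :: "real \<Rightarrow> 'b::banach \<Rightarrow> 'b"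
  assumes lip: "\<And>S. S < T \<Longrightarrow> \<exists>K. \<forall>t\<in>{0..S}. K-lipschitz_on UNIV (F t)"
    and cont: "continuous_on ({0..<T} \<times> UNIV) (\<lambda>(t, y). F t y)"
    and Y: "continuous_on {0..<T} Y" "\<And>t. t \<in> {0<..<T} \<Longrightarrow> (Y has_vector_derivative F t (Y t)) (at t)"
    and Y': "continuous_on {0..<T} Y'" "\<And>t. t \<in> {0<..<T} \<Longrightarrow> (Y' has_vector_derivative F t (Y' t)) (at t)"
    and "Y 0 = Y' 0" "t \<in> {0..<T}"
  shows "Y t = Y' t"
proof -
  define S where "S = (t + T) / 2"
  have S: "0 \<le> S" "S < T" "t \<in> {0..S}"
    using \<open>t \<in> {0..<T}\<close> by (auto simp: S_def)
  have "integral_solution S F (Y 0) Y"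
    using S by (intro ode_solution_imp_integral_solution continuous_on_subset[OF Y(1)] Y(2)) auto
  moreover have "integral_solution S F (Y 0) Y'"
    unfolding \<open>Y 0 = Y' 0\<close>
    using S by (intro ode_solution_imp_integral_solution continuous_on_subset[OF Y'(1)] Y'(2)) auto
  ultimately show ?thesis
    using integral_solution_unique_below[OF lip cont S(2) _ _ S(3)] by blast
qed

lemma ode_solution_exists_Ico:
  fixes F :: "real \<Rightarrow> 'b::banach \<Rightarrow> 'b"
  assumes "0 < T"
    and lip: "\<And>S. S < T \<Longrightarrow> \<exists>K. \<forall>t\<in>{0..S}. K-lipschitz_on UNIV (F t)"
    and cont: "continuous_on ({0..<T} \<times> UNIV) (\<lambda>(t, y). F t y)"
  shows "\<exists>Y. Y 0 = y0 \<and> (\<forall>t\<in>{0..<T}. (Y has_vector_derivative F t (Y t)) (at t within {0..<T}))"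
proof -
  define Ys where "Ys S = (SOME Y. integral_solution S F y0 Y)" for S
  have Ys: "integral_solution S F y0 (Ys S)" if "0 \<le> S" "S < T" for S
    unfolding Ys_def using integral_solution_exists_unique_below[OF lip cont that] by (metis someI_ex)
  have Ys_agree: "Ys S' t = Ys S t" if "0 \<le> S" "S \<le> S'" "S' < T" "t \<in> {0..S}" for S S' t
    using that by (intro integral_solution_unique_below[OF lip cont _ integral_solution_mono[OF Ys[of S']] Ys]) auto
  define Y where "Y t = Ys ((t + T) / 2) t" for t
  have Y_Ys: "Y t = Ys S t" if "0 \<le> S" "S < T" "t \<in> {0..S}" for S t
  proof -
    have "Y t = Ys (min S ((t + T) / 2)) t"
      unfolding Y_def using that by (intro Ys_agree) (auto simp: min_def)
    also have "\<dots> = Ys S t"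
      using that by (intro Ys_agree[symmetric]) (auto simp: min_def)
    finally show ?thesis .
  qed
  have "(Y has_vector_derivative F t (Y t)) (at t within {0..<T})" if t: "t \<in> {0..<T}" for t
  proof -
    define S where "S = (t + T) / 2"
    have S: "0 \<le> S" "S < T" "t \<in> {0..S}" "t < S"
      using t by (auto simp: S_def)
    have "(Ys S has_vector_derivative F t (Ys S t)) (at t within {0..S})"
    proof (rule integral_solution_has_vector_derivative[OF Ys[OF S(1,2)] _ S(3)])
      show "continuous_on ({0..S} \<times> UNIV) (\<lambda>(t, y). F t y)"
        using cont by (rule continuous_on_subset) (use S in auto)
    qed
    then have "(Y has_vector_derivative F t (Ys S t)) (at t within {0..S})"
      by (rule has_vector_derivative_transform_within[where d = 1]) (use S Y_Ys in auto)
    then have "(Y has_vector_derivative F t (Y t)) (at t within {0..S})"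
      using Y_Ys[OF S(1-3)] by simp
    moreover have "at t within {0..<T} = at t within {0..S}"
      by (rule at_within_nhd[of _ "{-1<..<S}"]) (use S in auto)
    ultimately show ?thesis
      by simp
  qed
  moreover have "Y 0 = y0"
    using Ys[of "T / 2"] \<open>0 < T\<close> by (simp add: Y_def integral_solution_initial)
  ultimately show ?thesis
    by blast
qed

lemma ode_solution_exists_Ico_C1:
  fixes F :: "real \<Rightarrow> 'b::banach \<Rightarrow> 'b"
  assumes "0 < T"
    and lip: "\<And>S. S < T \<Longrightarrow> \<exists>K. \<forall>t\<in>{0..S}. K-lipschitz_on UNIV (F t)"
    and cont: "continuous_on ({0..<T} \<times> UNIV) (\<lambda>(t, y). F t y)"
  obtains Y where "Y 0 = y0" "C1_on {0..<T} Y"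
    "\<And>t. t \<in> {0<..<T} \<Longrightarrow> (Y has_vector_derivative F t (Y t)) (at t)"
proof -
  obtain Y where Y0: "Y 0 = y0"
    and Y': "\<And>t. t \<in> {0..<T} \<Longrightarrow> (Y has_vector_derivative F t (Y t)) (at t within {0..<T})"
    using ode_solution_exists_Ico[OF assms] by blast
  have "continuous_on {0..<T} Y"
    unfolding continuous_on_eq_continuous_within using Y' has_vector_derivative_continuous by blast
  then have "C1_on {0..<T} Y"
    unfolding C1_on_def
    by (intro exI[of _ "\<lambda>t. F t (Y t)"] conjI ballI Y' continuous_on_compose_Pair[OF cont order_refl])
  moreover have "(Y has_vector_derivative F t (Y t)) (at t)" if "t \<in> {0<..<T}" for t
    using Y'[of t] at_within_interior[of t "{0..<T}"] that by simp
  ultimately show ?thesis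
    using that Y0 by blast
qed

lemma has_vector_derivative_fst:
  "(f has_vector_derivative f') F \<Longrightarrow> ((\<lambda>x. fst (f x)) has_vector_derivative fst f') F"
  unfolding has_vector_derivative_def by (drule has_derivative_fst) simp

lemma has_vector_derivative_snd:
  "(f has_vector_derivative f') F \<Longrightarrow> ((\<lambda>x. snd (f x)) has_vector_derivative snd f') F"
  unfolding has_vector_derivative_def by (drule has_derivative_snd) simp

lemma has_vector_derivative_Pair_iff:
  "((\<lambda>x. (f x, g x)) has_vector_derivative (f', g')) (at x within S) \<longleftrightarrow>
     (f has_vector_derivative f') (at x within S) \<and> (g has_vector_derivative g') (at x within S)"
  using has_vector_derivative_fst[of "\<lambda>x. (f x, g x)" "(f', g')" "at x within S"]
    has_vector_derivative_snd[of "\<lambda>x. (f x, g x)" "(f', g')" "at x within S"]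
  by (auto intro: has_vector_derivative_Pair)

lemma C1_on_imp_continuous_on: "C1_on S f \<Longrightarrow> continuous_on S f"
  unfolding C1_on_def continuous_on_eq_continuous_within
  using has_vector_derivative_continuous by blast

lemma C1_on_fst:
  assumes "C1_on S f"
  shows "C1_on S (\<lambda>t. fst (f t))"
proof -
  obtain f' where "\<forall>t\<in>S. (f has_vector_derivative f' t) (at t within S)" "continuous_on S f'"
    using assms by (auto simp: C1_on_def)
  then show ?thesis
    unfolding C1_on_def
    by (intro exI[of _ "\<lambda>t. fst (f' t)"]) (auto intro: has_vector_derivative_fst continuous_on_fst)
qed

lemma C1_on_snd:
  assumes "C1_on S f"
  shows "C1_on S (\<lambda>t. snd (f t))"
proof -
  obtain f' where "\<forall>t\<in>S. (f has_vector_derivative f' t) (at t within S)" "continuous_on S f'"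
    using assms by (auto simp: C1_on_def)
  then show ?thesis
    unfolding C1_on_def
    by (intro exI[of _ "\<lambda>t. snd (f' t)"]) (auto intro: has_vector_derivative_snd continuous_on_snd)
qed

definition system_field :: "('a::real_normed_vector \<Rightarrow> 'a) \<Rightarrow> real \<Rightarrow> real \<Rightarrow> 'a \<times> 'a \<Rightarrow> 'a \<times> 'a" where
  "system_field A T t p =
     (- snd p - A (fst p), - (1 / (T - t)) *\<^sub>R snd p - (1 / (T - t)) *\<^sub>R A (fst p))"

lemma lipschitz_on_system_field:
  assumes A: "L-lipschitz_on UNIV A" and "t \<le> S" "S < T"
  shows "((1 + 1 / (T - S)) * (1 + L))-lipschitz_on UNIV (system_field A T t)"
proof -
  define c where "c = 1 / (T - t)"
  have c: "0 \<le> c" "c \<le> 1 / (T - S)"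
    using assms(2,3) by (auto simp: c_def intro!: divide_left_mono)
  have L: "0 \<le> L"
    using A by (rule lipschitz_on_nonneg)
  have "1-lipschitz_on UNIV (fst :: 'a \<times> 'a \<Rightarrow> 'a)" and "1-lipschitz_on UNIV (snd :: 'a \<times> 'a \<Rightarrow> 'a)"
    by (intro lipschitz_onI; simp add: dist_fst_le dist_snd_le)+
  then have w: "(1 + L * 1)-lipschitz_on UNIV (\<lambda>p :: 'a \<times> 'a. snd p + A (fst p))"
    by (intro lipschitz_on_add lipschitz_on_compose2 lipschitz_on_subset[OF A]) auto
  have field: "system_field A T t = (\<lambda>p. (- (snd p + A (fst p)), (- c) *\<^sub>R (snd p + A (fst p))))"
    by (auto simp: system_field_def c_def algebra_simps)
  have "(sqrt ((1 + L)\<^sup>2 + (\<bar>- c\<bar> * (1 + L))\<^sup>2))-lipschitz_on UNIV (system_field A T t)"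
    unfolding field using w by (intro lipschitz_on_Pair lipschitz_on_minus lipschitz_on_cmult) simp_all
  moreover have "sqrt ((1 + L)\<^sup>2 + (\<bar>- c\<bar> * (1 + L))\<^sup>2) \<le> (1 + 1 / (T - S)) * (1 + L)"
  proof -
    have "sqrt ((1 + L)\<^sup>2 + (\<bar>- c\<bar> * (1 + L))\<^sup>2) \<le> (1 + L) + c * (1 + L)"
      using c L by (simp add: sqrt_sum_squares_le_sum)
    also have "\<dots> = (1 + c) * (1 + L)"
      by (simp add: algebra_simps)
    also have "\<dots> \<le> (1 + 1 / (T - S)) * (1 + L)"
      using c L by (intro mult_right_mono) auto
    finally show ?thesis .
  qed
  ultimately show ?thesis
    by (rule lipschitz_on_le)
qed

lemma continuous_on_system_field:
  assumes "continuous_on UNIV A"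
  shows "continuous_on ({..<T} \<times> UNIV) (\<lambda>(t, p). system_field A T t p)"
proof -
  have A_cont: "continuous_on ({..<T} \<times> UNIV) (\<lambda>x :: real \<times> 'a \<times> 'a. A (fst (snd x)))"
    using continuous_on_compose2[OF assms continuous_on_fst[OF continuous_on_snd[OF continuous_on_id]]]
    by simp
  show ?thesis
    unfolding system_field_def case_prod_beta by (intro continuous_intros A_cont) auto
qed

lemma system_field_lipschitz_below:
  assumes "L-lipschitz_on UNIV A" "S < T"
  shows "\<exists>K. \<forall>t\<in>{0..S}. K-lipschitz_on UNIV (system_field A T t)"
  using lipschitz_on_system_field[OF assms(1) _ assms(2)]
  by (intro exI[of _ "(1 + 1 / (T - S)) * (1 + L)"]) auto

lemma continuous_on_system_field_Ico:
  "continuous_on UNIV A \<Longrightarrow> continuous_on ({0..<T} \<times> UNIV) (\<lambda>(t, p). system_field A T t p)"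
  by (rule continuous_on_subset[OF continuous_on_system_field]) auto

definition ivp_solution ::
    "('a::real_normed_vector \<Rightarrow> 'a) \<Rightarrow> real \<Rightarrow> 'a \<Rightarrow> (real \<Rightarrow> 'a) \<Rightarrow> (real \<Rightarrow> 'a) \<Rightarrow> bool" where
  "ivp_solution A T X0 X Z \<longleftrightarrow> C1_on {0..<T} X \<and> C1_on {0..<T} Z \<and> X 0 = X0 \<and> Z 0 = 0 \<and>
     (\<forall>t\<in>{0<..<T}. (X has_vector_derivative (- Z t - A (X t))) (at t) \<and>
        (Z has_vector_derivative (- (1 / (T - t)) *\<^sub>R Z t - (1 / (T - t)) *\<^sub>R A (X t))) (at t))"

lemma ivp_solution_iff_Pair:
  "ivp_solution A T X0 X Z \<longleftrightarrow> C1_on {0..<T} X \<and> C1_on {0..<T} Z \<and> (X 0, Z 0) = (X0, 0) \<and>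
     (\<forall>t\<in>{0<..<T}. ((\<lambda>t. (X t, Z t)) has_vector_derivative system_field A T t (X t, Z t)) (at t))"
  by (simp add: ivp_solution_def system_field_def has_vector_derivative_Pair_iff)

lemma ivp_solution_exists:
  fixes A :: "'a::euclidean_space \<Rightarrow> 'a"
  assumes L: "L-lipschitz_on UNIV A" and "0 < T"
  obtains X Z where "ivp_solution A T X0 X Z"
proof -
  obtain Y where Y0: "Y 0 = (X0, 0)" and Y_C1: "C1_on {0..<T} Y"
    and Y': "\<And>t. t \<in> {0<..<T} \<Longrightarrow> (Y has_vector_derivative system_field A T t (Y t)) (at t)"
    using ode_solution_exists_Ico_C1[OF \<open>0 < T\<close> system_field_lipschitz_below[OF L]
        continuous_on_system_field_Ico[OF lipschitz_on_continuous_on[OF L]]]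
    by blast
  have "ivp_solution A T X0 (\<lambda>t. fst (Y t)) (\<lambda>t. snd (Y t))"
    unfolding ivp_solution_iff_Pair using C1_on_fst[OF Y_C1] C1_on_snd[OF Y_C1] Y0 Y' by simp
  then show ?thesis
    by (rule that)
qed

lemma ivp_solution_unique:
  fixes A :: "'a::euclidean_space \<Rightarrow> 'a"
  assumes L: "L-lipschitz_on UNIV A"
    and sol: "ivp_solution A T X0 X Z" and sol': "ivp_solution A T X0 X' Z'"
    and t: "t \<in> {0..<T}"
  shows "X' t = X t \<and> Z' t = Z t"
proof -
  have cont: "continuous_on {0..<T} (\<lambda>t. (X t, Z t))" "continuous_on {0..<T} (\<lambda>t. (X' t, Z' t))"
    using sol sol' unfolding ivp_solution_def by (intro continuous_on_Pair C1_on_imp_continuous_on; simp)+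
  have deriv:
    "\<And>t. t \<in> {0<..<T} \<Longrightarrow> ((\<lambda>t. (X t, Z t)) has_vector_derivative system_field A T t (X t, Z t)) (at t)"
    "\<And>t. t \<in> {0<..<T} \<Longrightarrow> ((\<lambda>t. (X' t, Z' t)) has_vector_derivative system_field A T t (X' t, Z' t)) (at t)"
    using sol sol' unfolding ivp_solution_iff_Pair by simp_all
  have "(\<lambda>t. (X' t, Z' t)) t = (\<lambda>t. (X t, Z t)) t"
    by (rule ode_solution_unique_Ico[OF system_field_lipschitz_below[OF L]
          continuous_on_system_field_Ico[OF lipschitz_on_continuous_on[OF L]] cont(2) deriv(2) cont(1) deriv(1)])
      (use sol sol' t in \<open>simp_all add: ivp_solution_def\<close>)
  then show ?thesis
    by simp
qed

theorem theoremH1: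
  fixes A :: "'a::euclidean_space \<Rightarrow> 'a" and T :: real and X0 :: 'a
  assumes "\<exists>L. L-lipschitz_on UNIV A"
    and "T > 0"
  shows "\<exists>X Z. C1_on {0..<T} X \<and> C1_on {0..<T} Z \<and> X 0 = X0 \<and> Z 0 = 0 \<and>
           (\<forall>t\<in>{0<..<T}. (X has_vector_derivative (- Z t - A (X t))) (at t) \<and>
              (Z has_vector_derivative (- (1 / (T - t)) *\<^sub>R Z t - (1 / (T - t)) *\<^sub>R A (X t))) (at t)) \<and>
           (\<forall>X' Z'. (C1_on {0..<T} X' \<and> C1_on {0..<T} Z' \<and> X' 0 = X0 \<and> Z' 0 = 0 \<and>
              (\<forall>t\<in>{0<..<T}. (X' has_vector_derivative (- Z' t - A (X' t))) (at t) \<and>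
                 (Z' has_vector_derivative (- (1 / (T - t)) *\<^sub>R Z' t - (1 / (T - t)) *\<^sub>R A (X' t))) (at t)))
              \<longrightarrow> (\<forall>t\<in>{0..<T}. X' t = X t \<and> Z' t = Z t))"
proof -
  obtain L where L: "L-lipschitz_on UNIV A"
    using assms(1) by blast
  obtain X Z where sol: "ivp_solution A T X0 X Z"
    using ivp_solution_exists[OF L assms(2)] .
  have "ivp_solution A T X0 X' Z' \<longrightarrow> (\<forall>t\<in>{0..<T}. X' t = X t \<and> Z' t = Z t)" for X' Z'
    using ivp_solution_unique[OF L sol] by blast
  with sol show ?thesis
    unfolding ivp_solution_def by blast
qed

end
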